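(* Let $G=(V,A)$, $\mathfrak n=\mathfrak n(G)$ and $\delta$ be as below, with $\delta(e_i)=\sum_{\alpha\in A}\lambda_{i,\alpha}e_i\wedge\alpha+\omega_i$. Let $e_{i_0}\in V$ and $\alpha\in A$. Suppose there are vertices $e_{i_0},e_{i_1},\dots,e_{i_{N-1}}$ and edges $\beta_0,\dots,\beta_{N-1}$ such that $\beta_k$ joins $e_{i_k}$ and $e_{i_{k+1}}$ (indices mod $N$, so $\beta_{N-1}$ joins $e_{i_{N-1}}$ and $e_{i_0}$) and $\beta_k\ne\alpha$ for all $k$. Then $\lambda_{i_0,\alpha}=(-1)^N\lambda_{i_0,\alpha}$; in particular, if $N$ is odd then $\lambda_{i_0,\alpha}=0$.
   Context: $G=(V,A)$ is a finite simple graph without loops and without isolated vertices, $V=\{e_1,\dots,e_n\}$ ordered, each edge joining $e_i,e_j$ ($i<j$) oriented from $e_i$ to $e_j$. $\mathfrak n(G)$ over a field of characteristic zero has basis $V\cup A$, $[e_i,e_j]=\alpha$ if $\alpha$ goes from $e_i$ to $e_j$, $[e_i,e_j]=0$ if not adjacent, edges central; $\mathfrak z=\mathrm{span}(A)$. $\delta$ is a Lie bialgebra structure on $\mathfrak n$ (linear $\delta:\mathfrak n\to\Lambda^2\mathfrak n$ satisfying co-Jacobi and $\delta[x,y]=[\delta x,y]+[x,\delta y]$) with $\delta(\mathfrak z)=0$, such that for every vertex $e_i$ one has $\delta(e_i)=\sum_{\alpha\in A}\lambda_{i,\alpha}e_i\wedge\alpha+\omega_i$ with scalars $\lambda_{i,\alpha}$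 and $\omega_i\in\Lambda^2\mathfrak z$. *)

theory Defs
  imports Main
begin

text \<open>Basis of n(G): vertices e_i (indexed 0..n-1, ordered by index) and edges.
  An edge is a pair (i,j) with i < j, oriented from e_i to e_j.\<close>
datatype bas = Vx nat | Ed "nat \<times> nat"

definition basis_set :: "nat \<Rightarrow> (nat \<times> nat) set \<Rightarrow> bas set" where
  "basis_set n A = Vx ` {..<n} \<union> Ed ` A"

definition simple_graph_noiso :: "nat \<Rightarrow> (nat \<times> nat) set \<Rightarrow> bool" where
  "simple_graph_noiso n A \<longleftrightarrow>
     (\<forall>(i,j)\<in>A. i < j \<and> j < n) \<and>
     (\<forall>i<n. \<exists>(a,b)\<in>A. i = a \<or> i = b)"

definition in_n :: "nat \<Rightarrow> (nat \<times> nat) set \<Rightarrow> (bas \<Rightarrow> 'k::field) \<Rightarrow> bool" where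
  "in_n n A x \<longleftrightarrow> (\<forall>b. b \<notin> basis_set n A \<longrightarrow> x b = 0)"

definition unitv :: "bas \<Rightarrow> bas \<Rightarrow> 'k::field" where
  "unitv e = (\<lambda>b. if b = e then 1 else 0)"

definition br :: "(nat \<times> nat) set \<Rightarrow> (bas \<Rightarrow> 'k::field) \<Rightarrow> (bas \<Rightarrow> 'k) \<Rightarrow> bas \<Rightarrow> 'k" where
  "br A x y = (\<lambda>b. case b of
      Vx _ \<Rightarrow> 0
    | Ed (i,j) \<Rightarrow> (if (i,j) \<in> A then x (Vx i) * y (Vx j) - x (Vx j) * y (Vx i) else 0))"

text \<open>Lambda^2 n is realised as antisymmetric 2-tensors t a b (coefficients w.r.t. basis pairs);
  x \<wedge> y = x \<otimes> y - y \<otimes> x.\<close>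
definition wedge :: "(bas \<Rightarrow> 'k::field) \<Rightarrow> (bas \<Rightarrow> 'k) \<Rightarrow> bas \<Rightarrow> bas \<Rightarrow> 'k" where
  "wedge x y = (\<lambda>a b. x a * y b - x b * y a)"

definition delta :: "nat \<Rightarrow> (nat \<times> nat) set \<Rightarrow> (bas \<Rightarrow> bas \<Rightarrow> bas \<Rightarrow> 'k::field)
    \<Rightarrow> (bas \<Rightarrow> 'k) \<Rightarrow> bas \<Rightarrow> bas \<Rightarrow> 'k" where
  "delta n A D x = (\<lambda>a b. \<Sum>e\<in>basis_set n A. x e * D e a b)"

text \<open>Adjoint action of x on 2-tensors: x.(u\<otimes>v) = [x,u]\<otimes>v + u\<otimes>[x,v].\<close>
definition act2 :: "nat \<Rightarrow> (nat \<times> nat) set \<Rightarrow> (bas \<Rightarrow> 'k::field) \<Rightarrow> (bas \<Rightarrow> bas \<Rightarrow> 'k)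
    \<Rightarrow> bas \<Rightarrow> bas \<Rightarrow> 'k" where
  "act2 n A x t = (\<lambda>a b. (\<Sum>c\<in>basis_set n A. br A x (unitv c) a * t c b)
                        + (\<Sum>c\<in>basis_set n A. br A x (unitv c) b * t a c))"

definition delta_id_delta :: "nat \<Rightarrow> (nat \<times> nat) set \<Rightarrow> (bas \<Rightarrow> bas \<Rightarrow> bas \<Rightarrow> 'k::field)
    \<Rightarrow> (bas \<Rightarrow> 'k) \<Rightarrow> bas \<Rightarrow> bas \<Rightarrow> bas \<Rightarrow> 'k" where
  "delta_id_delta n A D x = (\<lambda>a b c. \<Sum>d\<in>basis_set n A. delta n A D x d c * D d a b)"

text \<open>Lie bialgebra structure on n(G): delta maps into Lambda^2 n, satisfies co-Jacobi
  (cyclic sum of (delta \<otimes> id) delta vanishes) and the 1-cocycle condition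
  delta [x,y] = x.delta y - y.delta x  (= [delta x, y] + [x, delta y]).\<close>
definition lie_bialgebra :: "nat \<Rightarrow> (nat \<times> nat) set \<Rightarrow> (bas \<Rightarrow> bas \<Rightarrow> bas \<Rightarrow> 'k::field) \<Rightarrow> bool" where
  "lie_bialgebra n A D \<longleftrightarrow>
     (\<forall>e\<in>basis_set n A. (\<forall>a b. D e a b = - D e b a) \<and>
        (\<forall>a b. a \<notin> basis_set n A \<or> b \<notin> basis_set n A \<longrightarrow> D e a b = 0)) \<and>
     (\<forall>x. in_n n A x \<longrightarrow> (\<forall>a b c. delta_id_delta n A D x a b c + delta_id_delta n A D x b c a
                                   + delta_id_delta n A D x c a b = 0)) \<and>
     (\<forall>x y. in_n n A x \<longrightarrow> in_n n A y \<longrightarrow>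
        delta n A D (br A x y) = (\<lambda>a b. act2 n A x (delta n A D y) a b - act2 n A y (delta n A D x) a b))"

definition in_L2z :: "(nat \<times> nat) set \<Rightarrow> (bas \<Rightarrow> bas \<Rightarrow> 'k::field) \<Rightarrow> bool" where
  "in_L2z A w \<longleftrightarrow> (\<forall>a b. w a b = - w b a) \<and> (\<forall>a b. a \<notin> Ed ` A \<or> b \<notin> Ed ` A \<longrightarrow> w a b = 0)"

end

theory Submission imports Defs begin

text \<open>Evaluating the cocycle condition for the bracket of two adjacent vertices e_p, e_q at the
  pair of edges (p,q), \<alpha> gives 0 = \<lambda>_{q,\<alpha>} + \<lambda>_{p,\<alpha>}: the bracket is central, so its cobracket
  vanishes, while only the e_p \<wedge> \<alpha> and e_q \<wedge> \<alpha> components of \<delta>(e_p), \<delta>(e_q) survive the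
  adjoint action of the other vertex. Hence \<lambda>_{\<cdot>,\<alpha>} changes sign along every edge other than \<alpha>,
  and going once around a closed walk of length N avoiding \<alpha> multiplies it by (-1)^N.\<close>

lemma finite_edges_if_simple_graph:
  assumes "simple_graph_noiso n A"
  shows "finite A"
proof -
  have "A \<subseteq> {..<n} \<times> {..<n}"
    using assms unfolding simple_graph_noiso_def by fastforce
  then show ?thesis
    by (rule finite_subset) simp
qed

lemma finite_basis_set_if_simple_graph:
  assumes "simple_graph_noiso n A"
  shows "finite (basis_set n A)"
  using finite_edges_if_simple_graph[OF assms] unfolding basis_set_def by simp

lemma delta_unitv:
  assumes "finite (basis_set n A)" "e \<in> basis_set n A"
  shows "delta n A D (unitv e) = D e"
  using assms unfolding delta_def unitv_def
  by (simp add: if_distrib[where f = "\<lambda>c. c * y" for y] cong: if_cong)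

lemma br_unitv_Vx_Vx:
  assumes "(p, q) \<in> A" "(q, p) \<notin> A"
  shows "br A (unitv (Vx p)) (unitv (Vx q)) = (unitv (Ed (p, q)) :: bas \<Rightarrow> 'k::field)"
proof
  fix b
  have "p \<noteq> q"
    using assms by auto
  then show "br A (unitv (Vx p)) (unitv (Vx q)) b = (unitv (Ed (p, q)) :: bas \<Rightarrow> 'k) b"
    using assms by (cases b) (auto simp: br_def unitv_def split: if_splits)
qed

lemma sum_br_unitv_Vx_Ed:
  assumes "finite (basis_set n A)" "p < n" "q < n"
  shows "(\<Sum>c\<in>basis_set n A. br A (unitv (Vx i)) (unitv c) (Ed (p, q)) * f c)
     = (if (p, q) \<in> A then (if i = p then f (Vx q) else 0) - (if i = q then f (Vx p) else 0)
        else (0::'k::field))"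
proof -
  have mem: "Vx p \<in> basis_set n A" "Vx q \<in> basis_set n A"
    using assms by (auto simp: basis_set_def)
  have "(\<Sum>c\<in>basis_set n A. br A (unitv (Vx i)) (unitv c) (Ed (p, q)) * f c)
     = (\<Sum>c\<in>basis_set n A. if (p, q) \<in> A
          then (if i = p then (if c = Vx q then f c else 0) else 0)
             - (if i = q then (if c = Vx p then f c else 0) else 0)
          else 0)"
    by (rule sum.cong) (auto simp: br_def unitv_def)
  also have "\<dots> = (if (p, q) \<in> A then (if i = p then f (Vx q) else 0)
                    - (if i = q then f (Vx p) else 0) else 0)"
    using assms(1) mem
    by (cases "(p, q) \<in> A"; cases "i = p"; cases "i = q") (simp_all add: sum_subtractf sum_negf)
  finally show ?thesis .
qed

lemma vertex_cobracket_Vx_Ed: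
  fixes D :: "bas \<Rightarrow> bas \<Rightarrow> bas \<Rightarrow> 'k::field"
  assumes vert: "D (Vx j) = (\<lambda>a b. (\<Sum>\<gamma>\<in>A. lam \<gamma> * wedge (unitv (Vx j)) (unitv (Ed \<gamma>)) a b) + om a b)"
    and omz: "in_L2z A om" and "finite A" "\<gamma> \<in> A"
  shows "D (Vx j) (Vx q) (Ed \<gamma>) = (if q = j then lam \<gamma> else 0)"
    and "D (Vx j) (Ed \<gamma>) (Vx q) = (if q = j then - lam \<gamma> else 0)"
proof -
  have "Vx q \<notin> Ed ` A"
    by auto
  then have om_vanish: "om (Vx q) (Ed \<gamma>) = 0" "om (Ed \<gamma>) (Vx q) = 0"
    using omz unfolding in_L2z_def by blast+
  have "D (Vx j) (Vx q) (Ed \<gamma>) = (\<Sum>\<gamma>'\<in>A. if q = j \<and> \<gamma>' = \<gamma> then lam \<gamma>' else 0)"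
    unfolding vert om_vanish by (auto simp: wedge_def unitv_def intro!: sum.cong)
  then show "D (Vx j) (Vx q) (Ed \<gamma>) = (if q = j then lam \<gamma> else 0)"
    using assms(3,4) by simp
  have "D (Vx j) (Ed \<gamma>) (Vx q) = (\<Sum>\<gamma>'\<in>A. if q = j \<and> \<gamma>' = \<gamma> then - lam \<gamma>' else 0)"
    unfolding vert om_vanish by (auto simp: wedge_def unitv_def intro!: sum.cong)
  then show "D (Vx j) (Ed \<gamma>) (Vx q) = (if q = j then - lam \<gamma> else 0)"
    using assms(3,4) by simp
qed

lemma act2_vertex_cobrackets_eq_if_edge:
  fixes D :: "bas \<Rightarrow> bas \<Rightarrow> bas \<Rightarrow> 'k::field"
  assumes graph: "simple_graph_noiso n A"
    and bialg: "lie_bialgebra n A D"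
    and center: "\<forall>\<gamma>\<in>A. D (Ed \<gamma>) = (\<lambda>a b. 0)"
    and pq: "(p, q) \<in> A"
  shows "act2 n A (unitv (Vx p)) (D (Vx q)) = act2 n A (unitv (Vx q)) (D (Vx p))"
proof -
  have finB: "finite (basis_set n A)"
    using graph by (rule finite_basis_set_if_simple_graph)
  have edge_bounds: "i < j \<and> j < n" if "(i, j) \<in> A" for i j
    using graph that unfolding simple_graph_noiso_def by auto
  then have "p < q" "q < n" "p < n"
    using pq by fastforce+
  then have "(q, p) \<notin> A"
    using edge_bounds by fastforce
  have mem: "\<And>i. i < n \<Longrightarrow> Vx i \<in> basis_set n A" "Ed (p, q) \<in> basis_set n A"
    using pq by (auto simp: basis_set_def)
  have "in_n n A (unitv (Vx i) :: bas \<Rightarrow> 'k)" if "i < n" for i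
    using mem(1)[OF that] unfolding in_n_def unitv_def by auto
  then have "delta n A D (br A (unitv (Vx p)) (unitv (Vx q))) =
     (\<lambda>a b. act2 n A (unitv (Vx p)) (delta n A D (unitv (Vx q))) a b
          - act2 n A (unitv (Vx q)) (delta n A D (unitv (Vx p))) a b)"
    using bialg \<open>p < n\<close> \<open>q < n\<close> unfolding lie_bialgebra_def by blast
  moreover have "delta n A D (br A (unitv (Vx p)) (unitv (Vx q))) = (\<lambda>a b. 0)"
    unfolding br_unitv_Vx_Vx[OF pq \<open>(q, p) \<notin> A\<close>] delta_unitv[OF finB mem(2)]
    using center pq by simp
  ultimately have "(\<lambda>a b. act2 n A (unitv (Vx p)) (D (Vx q)) a b
      - act2 n A (unitv (Vx q)) (D (Vx p)) a b) = (\<lambda>a b. 0)"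
    using delta_unitv[OF finB mem(1), where D = D] \<open>p < n\<close> \<open>q < n\<close> by simp
  then show ?thesis
    by (simp add: fun_eq_iff)
qed

lemma lam_edge_antisym:
  fixes D :: "bas \<Rightarrow> bas \<Rightarrow> bas \<Rightarrow> 'k::field"
  assumes graph: "simple_graph_noiso n A"
    and bialg: "lie_bialgebra n A D"
    and center: "\<forall>\<gamma>\<in>A. D (Ed \<gamma>) = (\<lambda>a b. 0)"
    and vert: "\<forall>i<n. D (Vx i) = (\<lambda>a b. (\<Sum>\<gamma>\<in>A. lam i \<gamma> * wedge (unitv (Vx i)) (unitv (Ed \<gamma>)) a b) + om i a b)"
    and omz: "\<forall>i<n. in_L2z A (om i)"
    and pq: "(p, q) \<in> A" and alpha: "\<alpha> \<in> A" and ne: "\<alpha> \<noteq> (p, q)"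
  shows "lam q \<alpha> = - lam p \<alpha>"
proof -
  obtain r s where rs: "\<alpha> = (r, s)"
    by fastforce
  have finA: "finite A" and finB: "finite (basis_set n A)"
    using graph by (rule finite_edges_if_simple_graph, rule finite_basis_set_if_simple_graph)
  have edge_bounds: "i < j \<and> j < n" if "(i, j) \<in> A" for i j
    using graph that unfolding simple_graph_noiso_def by auto
  then have "p < q" "q < n" "p < n" "r < n" "s < n"
    using pq alpha unfolding rs by fastforce+
  have Dq: "D (Vx q) (Vx x) (Ed \<gamma>) = (if x = q then lam q \<gamma> else 0)"
       "D (Vx q) (Ed \<gamma>) (Vx x) = (if x = q then - lam q \<gamma> else 0)" if "\<gamma> \<in> A" for x \<gamma>
    using vertex_cobracket_Vx_Ed[where j = q and lam = "lam q" and om = "om q", OF _ _ finA that]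
      vert omz \<open>q < n\<close> by simp_all
  have Dp: "D (Vx p) (Vx x) (Ed \<gamma>) = (if x = p then lam p \<gamma> else 0)"
       "D (Vx p) (Ed \<gamma>) (Vx x) = (if x = p then - lam p \<gamma> else 0)" if "\<gamma> \<in> A" for x \<gamma>
    using vertex_cobracket_Vx_Ed[where j = p and lam = "lam p" and om = "om p", OF _ _ finA that]
      vert omz \<open>p < n\<close> by simp_all
  note act2_at_edges = act2_def sum_br_unitv_Vx_Ed[OF finB \<open>p < n\<close> \<open>q < n\<close>]
    sum_br_unitv_Vx_Ed[OF finB \<open>r < n\<close> \<open>s < n\<close>]
  have "lam q \<alpha> = act2 n A (unitv (Vx p)) (D (Vx q)) (Ed (p, q)) (Ed (r, s))"
    unfolding act2_at_edges using pq alpha ne \<open>p < q\<close> by (auto simp: rs Dq dest: edge_bounds)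
  also have "\<dots> = act2 n A (unitv (Vx q)) (D (Vx p)) (Ed (p, q)) (Ed (r, s))"
    by (simp only: act2_vertex_cobrackets_eq_if_edge[OF graph bialg center pq])
  also have "\<dots> = - lam p \<alpha>"
    unfolding act2_at_edges using pq alpha ne \<open>p < q\<close> by (auto simp: rs Dp dest: edge_bounds)
  finally show ?thesis .
qed

lemma sign_around_closed_walk:
  fixes f :: "nat \<Rightarrow> 'a::ring_1"
  assumes "0 < N" and flip: "\<forall>k<N. f (Suc k mod N) = - f k"
  shows "f 0 = (-1) ^ N * f 0"
proof -
  have along: "f k = (-1) ^ k * f 0" if "k < N" for k
    using that
  proof (induction k)
    case (Suc k)
    then have "f (Suc k) = - f k"
      using flip[rule_format, of k] by simp
    then show ?case
      using Suc by simp
  qed simp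
  obtain m where "N = Suc m"
    using \<open>0 < N\<close> gr0_implies_Suc by blast
  then have "f 0 = - f m"
    using flip[rule_format, of m] by simp
  then show ?thesis
    using along[of m] \<open>N = Suc m\<close> by simp
qed

theorem mainTheorem16:
  fixes n :: nat and A :: "(nat \<times> nat) set"
    and D :: "bas \<Rightarrow> bas \<Rightarrow> bas \<Rightarrow> 'k::field_char_0"
    and lam :: "nat \<Rightarrow> nat \<times> nat \<Rightarrow> 'k" and om :: "nat \<Rightarrow> bas \<Rightarrow> bas \<Rightarrow> 'k"
    and i0 :: nat and \<alpha> :: "nat \<times> nat" and N :: nat
    and iv :: "nat \<Rightarrow> nat" and \<beta> :: "nat \<Rightarrow> nat \<times> nat"
  assumes graph: "simple_graph_noiso n A"
    and bialg: "lie_bialgebra n A D"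
    and center: "\<forall>\<gamma>\<in>A. D (Ed \<gamma>) = (\<lambda>a b. 0)"
    and vert: "\<forall>i<n. D (Vx i) = (\<lambda>a b. (\<Sum>\<gamma>\<in>A. lam i \<gamma> * wedge (unitv (Vx i)) (unitv (Ed \<gamma>)) a b) + om i a b)"
    and omz: "\<forall>i<n. in_L2z A (om i)"
    and i0: "i0 < n" and alpha: "\<alpha> \<in> A"
    and Npos: "0 < N"
    and start: "iv 0 = i0"
    and verts: "\<forall>k<N. iv k < n"
    and edges: "\<forall>k<N. \<beta> k \<in> A \<and> \<beta> k \<noteq> \<alpha> \<and>
                  (\<beta> k = (iv k, iv (Suc k mod N)) \<or> \<beta> k = (iv (Suc k mod N), iv k))"
  shows "lam i0 \<alpha> = (-1) ^ N * lam i0 \<alpha> \<and> (odd N \<longrightarrow> lam i0 \<alpha> = 0)"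
proof -
  have "lam (iv (Suc k mod N)) \<alpha> = - lam (iv k) \<alpha>" if "k < N" for k
  proof -
    have "\<beta> k \<in> A" "\<beta> k \<noteq> \<alpha>"
      and "\<beta> k = (iv k, iv (Suc k mod N)) \<or> \<beta> k = (iv (Suc k mod N), iv k)"
      using edges \<open>k < N\<close> by auto
    then show ?thesis
      using lam_edge_antisym[OF graph bialg center vert omz _ alpha] by (auto simp: minus_equation_iff)
  qed
  then have sign: "lam i0 \<alpha> = (-1) ^ N * lam i0 \<alpha>"
    using sign_around_closed_walk[OF Npos, of "\<lambda>k. lam (iv k) \<alpha>"] start by blast
  moreover have "lam i0 \<alpha> = 0" if "odd N"
    using sign that by simp
  ultimately show ?thesis by blast
qed

end
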